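(* Let $E\in\mathbb C$ and let $z_1,\dots,z_{2m}$ be the eigenvalues of $T(E)$ (with algebraic multiplicity; all nonzero), with exponents $\xi_k=\frac1n\ln|z_k|$. Then for every real $\xi$, $$\frac1m\sum_{k:\ \xi_k<\xi}(\xi-\xi_k)\;-\;\xi=\frac{1}{mn}\int_0^{2\pi}\frac{d\varphi}{2\pi}\,\ln\Big|\det\big[H(e^{n\xi+i\varphi})-EI_{nm}\big]\Big|\;-\;\frac{1}{mn}\sum_{j=1}^n\ln|\det C_j|.$$
   Context: Fix integers $m\ge 1$, $n\ge 3$ and matrices $A_k,B_k,C_k\in\mathbb C^{m\times m}$, $k=1,\dots,n$, with all $B_k,C_k$ invertible. For $E\in\mathbb C$ the one-step transfer matrices are $t_k(E)=\begin{pmatrix} B_k^{-1}(E I_m-A_k) & -B_k^{-1}C_k\\ I_m & 0\end{pmatrix}\in\mathbb C^{2m\times 2m}$ and the transfer matrix is $T(E)=t_n(E)\cdots t_1(E)$. For $z\in\mathbb C\setminus\{0\}$, $H(z)\in\mathbb C^{nm\times nm}$ is the block matrix (blocks of size $m\times m$, indexed $1,\dots,n$) with diagonal blocks $H_{kk}=A_k$, superdiagonal blocks $H_{k,k+1}=B_k$ and subdiagonal blocks $H_{k+1,k}=C_{k+1}$ ($k=1,\dots,n-1$), corner blocks $H_{1,n}=z^{-1}C_1$ and $H_{n,1}=zB_n$, and all other blocks zero. *)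

theory Defs
  imports "HOL-Analysis.Analysis" "Jordan_Normal_Form.Gauss_Jordan_Elimination"
    "Jordan_Normal_Form.Char_Poly"
begin

text \<open>Block matrices over complex numbers; block indices run over 1..n,
  the block sequences A, B, C are functions nat => complex mat.\<close>

definition minv :: "complex mat \<Rightarrow> complex mat" where
  "minv X = the (mat_inverse X)"

definition tstep :: "nat \<Rightarrow> (nat \<Rightarrow> complex mat) \<Rightarrow> (nat \<Rightarrow> complex mat) \<Rightarrow> (nat \<Rightarrow> complex mat)
    \<Rightarrow> nat \<Rightarrow> complex \<Rightarrow> complex mat" where
  "tstep m A B C k E = four_block_mat
     (minv (B k) * (E \<cdot>\<^sub>m 1\<^sub>m m - A k)) (- (minv (B k) * C k))
     (1\<^sub>m m) (0\<^sub>m m m)"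

fun tprod :: "nat \<Rightarrow> (nat \<Rightarrow> complex mat) \<Rightarrow> (nat \<Rightarrow> complex mat) \<Rightarrow> (nat \<Rightarrow> complex mat)
    \<Rightarrow> nat \<Rightarrow> complex \<Rightarrow> complex mat" where
  "tprod m A B C 0 E = 1\<^sub>m (2 * m)"
| "tprod m A B C (Suc k) E = tstep m A B C (Suc k) E * tprod m A B C k E"

definition transfer :: "nat \<Rightarrow> nat \<Rightarrow> (nat \<Rightarrow> complex mat) \<Rightarrow> (nat \<Rightarrow> complex mat)
    \<Rightarrow> (nat \<Rightarrow> complex mat) \<Rightarrow> complex \<Rightarrow> complex mat" where
  "transfer m n A B C E = tprod m A B C n E"

definition Hblock :: "nat \<Rightarrow> (nat \<Rightarrow> complex mat) \<Rightarrow> (nat \<Rightarrow> complex mat) \<Rightarrow> (nat \<Rightarrow> complex mat)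
    \<Rightarrow> complex \<Rightarrow> nat \<Rightarrow> nat \<Rightarrow> complex mat" where
  "Hblock n A B C z k l =
     (if k = l then A k
      else if l = k + 1 then B k
      else if k = l + 1 then C k
      else if k = 1 \<and> l = n then inverse z \<cdot>\<^sub>m C 1
      else if k = n \<and> l = 1 then z \<cdot>\<^sub>m B n
      else 0\<^sub>m (dim_row (A 1)) (dim_row (A 1)))"

definition Hmat :: "nat \<Rightarrow> nat \<Rightarrow> (nat \<Rightarrow> complex mat) \<Rightarrow> (nat \<Rightarrow> complex mat) \<Rightarrow> (nat \<Rightarrow> complex mat)
    \<Rightarrow> complex \<Rightarrow> complex mat" where
  "Hmat m n A B C z = mat (n * m) (n * m)
     (\<lambda>(i, j). Hblock n A B C z (i div m + 1) (j div m + 1) $$ (i mod m, j mod m))"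

end

theory Submission
  imports Defs
begin

text \<open>Both sides of the identity are governed by the \<open>(n+2)\<close>-block system formed by the equations
  \<open>C\<^sub>k \<psi>\<^sub>k\<^sub>-\<^sub>1 + (A\<^sub>k - E) \<psi>\<^sub>k + B\<^sub>k \<psi>\<^sub>k\<^sub>+\<^sub>1 = 0\<close> and the Bloch conditions
  \<open>\<psi>\<^sub>n = z \<psi>\<^sub>0\<close>, \<open>\<psi>\<^sub>n\<^sub>+\<^sub>1 = z \<psi>\<^sub>1\<close>. Column operations eliminating \<open>\<psi>\<^sub>0, \<psi>\<^sub>n\<^sub>+\<^sub>1\<close> reduce its
  determinant to \<open>(-z)\<^sup>m det (H(z) - E)\<close>; column operations along the recurrence, eliminating
  \<open>\<psi>\<^sub>2, \<dots>, \<psi>\<^sub>n\<^sub>+\<^sub>1\<close>, reduce it to \<open>\<plusminus>det (T(E) - z) \<Prod> det B\<^sub>k\<close>. On the circle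
  \<open>|z| = r = e\<^sup>n\<^sup>\<xi>\<close> this gives \<open>|det (H(z) - E)| = r\<^sup>-\<^sup>m \<Prod> |det B\<^sub>k| \<Prod> |z - z\<^sub>k|\<close>, and Jensen's formula
  for a linear factor, \<open>(1/2\<pi>) \<integral> ln |r e\<^sup>i\<^sup>\<phi> - a| d\<phi> = max (ln r) (ln |a|)\<close>, integrates the logarithm.
  The remaining constant is identified by \<open>\<Prod> z\<^sub>k = det T(E)\<close>, whose modulus is
  \<open>\<Prod> |det C\<^sub>k| / |det B\<^sub>k|\<close>.\<close>

section \<open>Block matrices\<close>

text \<open>Square block matrices with \<open>N \<times> N\<close> blocks of size \<open>m\<close>; unlike in \<open>Hmat\<close>, block indices start at \<open>0\<close>.\<close>

definition block_mat :: "nat \<Rightarrow> nat \<Rightarrow> (nat \<Rightarrow> nat \<Rightarrow> 'a mat) \<Rightarrow> 'a mat" where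
  "block_mat N m X = mat (N * m) (N * m) (\<lambda>(i, j). X (i div m) (j div m) $$ (i mod m, j mod m))"

lemma block_mat_carrier [simp]: "block_mat N m X \<in> carrier_mat (N * m) (N * m)"
  and dim_row_block_mat [simp]: "dim_row (block_mat N m X) = N * m"
  and dim_col_block_mat [simp]: "dim_col (block_mat N m X) = N * m"
  by (simp_all add: block_mat_def)

lemma index_block_mat:
  "i < N * m \<Longrightarrow> j < N * m \<Longrightarrow> block_mat N m X $$ (i, j) = X (i div m) (j div m) $$ (i mod m, j mod m)"
  by (simp add: block_mat_def)

lemma div_less_of_less_mult: "i < N * m \<Longrightarrow> i div m < (N :: nat)"
  by (simp add: less_mult_imp_div_less)

lemma mod_less_of_less_mult: "i < N * m \<Longrightarrow> i mod m < (m :: nat)"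
  by (cases m) auto

lemma eq_of_div_mod_eq: "i div m = j div m \<Longrightarrow> i mod m = j mod m \<Longrightarrow> i = (j :: nat)"
  by (metis div_mult_mod_eq)

lemma index_mult_block_mat:
  fixes X Y :: "nat \<Rightarrow> nat \<Rightarrow> 'a :: comm_ring_1 mat"
  assumes X: "\<And>i b. i < N \<Longrightarrow> b < N \<Longrightarrow> X i b \<in> carrier_mat m m"
    and Y: "\<And>b j. b < N \<Longrightarrow> j < N \<Longrightarrow> Y b j \<in> carrier_mat m m"
    and ij: "i < N * m" "j < N * m"
  shows "(block_mat N m X * block_mat N m Y) $$ (i, j) =
    (\<Sum>b<N. (X (i div m) b * Y b (j div m)) $$ (i mod m, j mod m))"
proof -
  have idm: "i div m < N" "j div m < N" "i mod m < m" "j mod m < m"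
    using ij by (auto intro: div_less_of_less_mult mod_less_of_less_mult)
  have "(block_mat N m X * block_mat N m Y) $$ (i, j) =
      (\<Sum>t<N * m. block_mat N m X $$ (i, t) * block_mat N m Y $$ (t, j))"
    using ij by (simp add: scalar_prod_def lessThan_atLeast0)
  also have "\<dots> = (\<Sum>b<N. \<Sum>t\<in>{b * m..<b * m + m}. block_mat N m X $$ (i, t) * block_mat N m Y $$ (t, j))"
    by (rule sum.nat_group[symmetric])
  also have "\<dots> = (\<Sum>b<N. (X (i div m) b * Y b (j div m)) $$ (i mod m, j mod m))"
  proof (rule sum.cong[OF refl])
    fix b assume b: "b \<in> {..<N}"
    have lt: "b * m + c < N * m" if "c < m" for c
    proof -
      have "b * m + c < (b + 1) * m" using that by simp
      also have "\<dots> \<le> N * m" using b by (intro mult_le_mono1) auto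
      finally show ?thesis .
    qed
    have "(\<Sum>t\<in>{b * m..<b * m + m}. block_mat N m X $$ (i, t) * block_mat N m Y $$ (t, j)) =
        (\<Sum>c<m. block_mat N m X $$ (i, b * m + c) * block_mat N m Y $$ (b * m + c, j))"
      by (simp add: sum.shift_bounds_nat_ivl[of _ 0 "b * m" m, simplified] lessThan_atLeast0 add.commute)
    also have "\<dots> = (X (i div m) b * Y b (j div m)) $$ (i mod m, j mod m)"
      using X[of "i div m" b] Y[of b "j div m"] b idm ij
      by (auto simp: index_block_mat lt scalar_prod_def lessThan_atLeast0 intro!: sum.cong)
    finally show "(\<Sum>t\<in>{b * m..<b * m + m}. block_mat N m X $$ (i, t) * block_mat N m Y $$ (t, j)) =
        (X (i div m) b * Y b (j div m)) $$ (i mod m, j mod m)" .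
  qed
  finally show ?thesis .
qed

lemma det_block_mat_elementary:
  fixes Y :: "nat \<Rightarrow> 'a :: comm_ring_1 mat"
  assumes qS: "q \<notin> S" and one_side: "(\<forall>p\<in>S. q < p) \<or> (\<forall>p\<in>S. p < q)"
  shows "det (block_mat N m (\<lambda>b j. if j = q \<and> b \<in> S then Y b else if b = j then 1\<^sub>m m else 0\<^sub>m m m)) = 1"
    (is "det (block_mat N m ?U) = 1")
proof -
  have diag: "prod_list (diag_mat (block_mat N m ?U)) = 1"
  proof -
    have all1: "prod_list xs = 1" if "\<forall>x\<in>set xs. x = 1" for xs :: "'a list"
      using that by (induct xs) auto
    have "\<forall>x\<in>set (diag_mat (block_mat N m ?U)). x = 1"
      using qS mod_less_of_less_mult by (auto simp: diag_mat_def index_block_mat)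
    then show ?thesis by (rule all1)
  qed
  from one_side show ?thesis
  proof
    assume lo: "\<forall>p\<in>S. q < p"
    have "det (block_mat N m ?U) = prod_list (diag_mat (block_mat N m ?U))"
    proof (rule det_lower_triangular[of "N * m"])
      fix i j assume ij: "i < j" "j < N * m"
      then have "i div m \<le> j div m" by (simp add: div_le_mono)
      then show "block_mat N m ?U $$ (i, j) = 0"
        using ij lo mod_less_of_less_mult[of i N m] mod_less_of_less_mult[of j N m]
        by (auto simp: index_block_mat dest: eq_of_div_mod_eq)
    qed auto
    then show ?thesis using diag by simp
  next
    assume up: "\<forall>p\<in>S. p < q"
    have "det (block_mat N m ?U) = prod_list (diag_mat (block_mat N m ?U))"
    proof (rule det_upper_triangular[of _ "N * m"])
      show "upper_triangular (block_mat N m ?U)"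
        unfolding upper_triangular_def
      proof (intro allI impI)
        fix i j assume ij: "i < dim_row (block_mat N m ?U)" "j < i"
        then have "j div m \<le> i div m" by (simp add: div_le_mono)
        then show "block_mat N m ?U $$ (i, j) = 0"
          using ij up mod_less_of_less_mult[of i N m] mod_less_of_less_mult[of j N m]
          by (auto simp: index_block_mat dest: eq_of_div_mod_eq)
      qed
    qed auto
    then show ?thesis using diag by simp
  qed
qed

lemma det_block_mat_add_columns:
  fixes X X' :: "nat \<Rightarrow> nat \<Rightarrow> 'a :: comm_ring_1 mat"
  assumes X: "\<And>i j. i < N \<Longrightarrow> j < N \<Longrightarrow> X i j \<in> carrier_mat m m"
    and Y: "\<And>p. p \<in> S \<Longrightarrow> Y p \<in> carrier_mat m m"
    and q: "q < N" and S: "S \<subseteq> {..<N}" and qS: "q \<notin> S"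
    and one_side: "(\<forall>p\<in>S. q < p) \<or> (\<forall>p\<in>S. p < q)"
    and other_cols: "\<And>i j. i < N \<Longrightarrow> j < N \<Longrightarrow> j \<noteq> q \<Longrightarrow> X' i j = X i j"
    and col_q: "\<And>i r c. i < N \<Longrightarrow> r < m \<Longrightarrow> c < m \<Longrightarrow>
       X' i q $$ (r, c) = X i q $$ (r, c) + (\<Sum>p\<in>S. (X i p * Y p) $$ (r, c))"
  shows "det (block_mat N m X') = det (block_mat N m X)"
proof -
  define U where "U = (\<lambda>b j. if j = q \<and> b \<in> S then Y b else if b = j then 1\<^sub>m m else 0\<^sub>m m m)"
  have U: "U b j \<in> carrier_mat m m" for b j using Y unfolding U_def by auto
  have finS: "finite S" using S finite_subset by blast
  have "block_mat N m X' = block_mat N m X * block_mat N m U"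
  proof (rule eq_matI)
    fix i j assume "i < dim_row (block_mat N m X * block_mat N m U)" "j < dim_col (block_mat N m X * block_mat N m U)"
    then have ij: "i < N * m" "j < N * m" by auto
    note dm = div_less_of_less_mult[OF ij(1)] div_less_of_less_mult[OF ij(2)]
      mod_less_of_less_mult[OF ij(1)] mod_less_of_less_mult[OF ij(2)]
    have Xc: "b < N \<Longrightarrow> X (i div m) b \<in> carrier_mat m m" for b using X dm by auto
    have "(block_mat N m X * block_mat N m U) $$ (i, j) =
        (\<Sum>b<N. (X (i div m) b * U b (j div m)) $$ (i mod m, j mod m))"
      by (rule index_mult_block_mat[OF X U ij])
    also have "\<dots> = (\<Sum>b<N. (if j div m = q \<and> b \<in> S then (X (i div m) b * Y b) $$ (i mod m, j mod m) else 0)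
        + (if b = j div m then X (i div m) b $$ (i mod m, j mod m) else 0))"
      using Xc dm qS
      by (intro sum.cong) (auto simp: U_def right_mult_one_mat[OF Xc] right_mult_zero_mat[OF Xc])
    also have "\<dots> = (if j div m = q then (\<Sum>b\<in>S. (X (i div m) b * Y b) $$ (i mod m, j mod m)) else 0)
        + X (i div m) (j div m) $$ (i mod m, j mod m)"
      using S dm by (simp add: sum.distrib sum.If_cases Int_absorb1 finS)
    also have "\<dots> = block_mat N m X' $$ (i, j)"
      using other_cols col_q dm ij by (simp add: index_block_mat)
    finally show "block_mat N m X' $$ (i, j) = (block_mat N m X * block_mat N m U) $$ (i, j)" ..
  qed auto
  moreover have "det (block_mat N m U) = 1"
    unfolding U_def by (rule det_block_mat_elementary[OF qS one_side])
  ultimately show ?thesis by (simp add: det_mult[of _ "N * m"])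
qed

lemma det_upper_right_zero:
  fixes M :: "'a :: idom mat"
  assumes M: "M \<in> carrier_mat (p + q) (p + q)"
    and zero: "\<And>i j. i < p \<Longrightarrow> p \<le> j \<Longrightarrow> j < p + q \<Longrightarrow> M $$ (i, j) = 0"
  shows "det M = det (mat p p (\<lambda>(i, j). M $$ (i, j))) * det (mat q q (\<lambda>(i, j). M $$ (i + p, j + p)))"
proof -
  obtain M1 M2 M3 M4 where sb: "split_block M p p = (M1, M2, M3, M4)" by (metis prod_cases4)
  have dims: "dim_row M = p + q" "dim_col M = p + q" using M by auto
  note spl = split_block[OF sb dims]
  have "M1 = mat p p (\<lambda>(i, j). M $$ (i, j))" "M4 = mat q q (\<lambda>(i, j). M $$ (i + p, j + p))" "M2 = 0\<^sub>m p q"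
    using sb dims zero unfolding split_block_def Let_def by (auto intro!: eq_matI)
  then show ?thesis
    by (subst spl(5), subst det_four_block_mat_upper_right_zero[OF spl(1) _ spl(3) spl(4)]) simp_all
qed

lemma det_lower_left_zero:
  fixes M :: "'a :: idom mat"
  assumes M: "M \<in> carrier_mat (p + q) (p + q)"
    and zero: "\<And>i j. p \<le> i \<Longrightarrow> i < p + q \<Longrightarrow> j < p \<Longrightarrow> M $$ (i, j) = 0"
  shows "det M = det (mat p p (\<lambda>(i, j). M $$ (i, j))) * det (mat q q (\<lambda>(i, j). M $$ (i + p, j + p)))"
proof -
  obtain M1 M2 M3 M4 where sb: "split_block M p p = (M1, M2, M3, M4)" by (metis prod_cases4)
  have dims: "dim_row M = p + q" "dim_col M = p + q" using M by auto
  note spl = split_block[OF sb dims]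
  have "M1 = mat p p (\<lambda>(i, j). M $$ (i, j))" "M4 = mat q q (\<lambda>(i, j). M $$ (i + p, j + p))" "M3 = 0\<^sub>m q p"
    using sb dims zero unfolding split_block_def Let_def by (auto intro!: eq_matI)
  then show ?thesis
    by (subst spl(5), subst det_four_block_mat_lower_left_zero[OF spl(1) spl(2) _ spl(4)]) simp_all
qed

lemma div_mod_add_mult_right:
  "i < q * (m :: nat) \<Longrightarrow> (i + p * m) div m = i div m + p \<and> (i + p * m) mod m = i mod m"
  by (cases "m = 0") auto

lemma block_mat_upper_left_corner:
  "mat (p * m) (p * m) (\<lambda>(i, j). block_mat (p + q) m X $$ (i, j)) = block_mat p m X"
proof (rule eq_matI)
  fix i j assume ij: "i < dim_row (block_mat p m X)" "j < dim_col (block_mat p m X)"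
  then have "i < (p + q) * m" "j < (p + q) * m" by (auto simp: add_mult_distrib)
  with ij show "mat (p * m) (p * m) (\<lambda>(i, j). block_mat (p + q) m X $$ (i, j)) $$ (i, j) = block_mat p m X $$ (i, j)"
    by (simp add: index_block_mat)
qed auto

lemma block_mat_lower_right_corner:
  "mat (q * m) (q * m) (\<lambda>(i, j). block_mat (p + q) m X $$ (i + p * m, j + p * m)) =
    block_mat q m (\<lambda>i j. X (i + p) (j + p))"
proof (rule eq_matI)
  fix i j assume ij: "i < dim_row (block_mat q m (\<lambda>i j. X (i + p) (j + p)))"
    "j < dim_col (block_mat q m (\<lambda>i j. X (i + p) (j + p)))"
  then have "i + p * m < (p + q) * m" "j + p * m < (p + q) * m" by (auto simp: algebra_simps)
  with ij show "mat (q * m) (q * m) (\<lambda>(i, j). block_mat (p + q) m X $$ (i + p * m, j + p * m)) $$ (i, j) =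
      block_mat q m (\<lambda>i j. X (i + p) (j + p)) $$ (i, j)"
    by (simp add: index_block_mat div_mod_add_mult_right)
qed auto

lemma det_block_mat_upper_right_zero:
  fixes X :: "nat \<Rightarrow> nat \<Rightarrow> 'a :: idom mat"
  assumes zero: "\<And>i j. i < p \<Longrightarrow> p \<le> j \<Longrightarrow> j < p + q \<Longrightarrow> X i j = 0\<^sub>m m m"
  shows "det (block_mat (p + q) m X) = det (block_mat p m X) * det (block_mat q m (\<lambda>i j. X (i + p) (j + p)))"
proof -
  have c: "block_mat (p + q) m X \<in> carrier_mat (p * m + q * m) (p * m + q * m)"
    using block_mat_carrier[of "p + q" m X] by (simp add: algebra_simps)
  have "det (block_mat (p + q) m X) = det (mat (p * m) (p * m) (\<lambda>(i, j). block_mat (p + q) m X $$ (i, j)))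
      * det (mat (q * m) (q * m) (\<lambda>(i, j). block_mat (p + q) m X $$ (i + p * m, j + p * m)))"
  proof (rule det_upper_right_zero[OF c])
    fix i j assume ij: "i < p * m" "p * m \<le> j" "j < p * m + q * m"
    moreover have "p * m div m \<le> j div m" using ij by (intro div_le_mono) auto
    ultimately have "i div m < p" "p \<le> j div m" "j div m < p + q" "j mod m < m"
      using div_less_of_less_mult[of i p m] div_less_of_less_mult[of j "p + q" m] mod_less_of_less_mult[of j "p + q" m]
      by (auto simp: algebra_simps split: if_splits)
    then show "block_mat (p + q) m X $$ (i, j) = 0"
      using ij zero mod_less_of_less_mult[of i p m] by (simp add: index_block_mat algebra_simps)
  qed
  also note block_mat_upper_left_corner
  also note block_mat_lower_right_corner
  finally show ?thesis .
qed

lemma det_block_mat_lower_left_zero: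
  fixes X :: "nat \<Rightarrow> nat \<Rightarrow> 'a :: idom mat"
  assumes zero: "\<And>i j. p \<le> i \<Longrightarrow> i < p + q \<Longrightarrow> j < p \<Longrightarrow> X i j = 0\<^sub>m m m"
  shows "det (block_mat (p + q) m X) = det (block_mat p m X) * det (block_mat q m (\<lambda>i j. X (i + p) (j + p)))"
proof -
  have c: "block_mat (p + q) m X \<in> carrier_mat (p * m + q * m) (p * m + q * m)"
    using block_mat_carrier[of "p + q" m X] by (simp add: algebra_simps)
  have "det (block_mat (p + q) m X) = det (mat (p * m) (p * m) (\<lambda>(i, j). block_mat (p + q) m X $$ (i, j)))
      * det (mat (q * m) (q * m) (\<lambda>(i, j). block_mat (p + q) m X $$ (i + p * m, j + p * m)))"
  proof (rule det_lower_left_zero[OF c])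
    fix i j assume ij: "p * m \<le> i" "i < p * m + q * m" "j < p * m"
    moreover have "p * m div m \<le> i div m" using ij by (intro div_le_mono) auto
    ultimately have "j div m < p" "p \<le> i div m" "i div m < p + q" "i mod m < m"
      using div_less_of_less_mult[of j p m] div_less_of_less_mult[of i "p + q" m] mod_less_of_less_mult[of i "p + q" m]
      by (auto simp: algebra_simps split: if_splits)
    then show "block_mat (p + q) m X $$ (i, j) = 0"
      using ij zero mod_less_of_less_mult[of j p m] by (simp add: index_block_mat algebra_simps)
  qed
  also note block_mat_upper_left_corner
  also note block_mat_lower_right_corner
  finally show ?thesis .
qed

lemma block_mat_one: "X 0 0 \<in> carrier_mat m m \<Longrightarrow> block_mat 1 m X = X 0 0"
  by (rule eq_matI) (auto simp: block_mat_def)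

lemma block_mat_two:
  assumes "X 0 0 \<in> carrier_mat m m" "X 0 1 \<in> carrier_mat m m" "X 1 0 \<in> carrier_mat m m" "X 1 1 \<in> carrier_mat m m"
  shows "block_mat 2 m X = four_block_mat (X 0 0) (X 0 1) (X 1 0) (X 1 1)"
  using assms by (intro eq_matI) (auto simp: block_mat_def four_block_mat_def le_div_geq le_mod_geq)

lemma det_block_mat_lower_triangular:
  fixes X :: "nat \<Rightarrow> nat \<Rightarrow> 'a :: idom mat"
  assumes "\<And>i j. i < N \<Longrightarrow> j < N \<Longrightarrow> X i j \<in> carrier_mat m m"
    and "\<And>i j. i < j \<Longrightarrow> j < N \<Longrightarrow> X i j = 0\<^sub>m m m"
  shows "det (block_mat N m X) = (\<Prod>i<N. det (X i i))"
  using assms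
proof (induct N)
  case 0
  then show ?case by (simp add: block_mat_def)
next
  case (Suc N)
  have "det (block_mat (N + 1) m X) = det (block_mat N m X) * det (block_mat 1 m (\<lambda>i j. X (i + N) (j + N)))"
    using Suc.prems(2) by (intro det_block_mat_upper_right_zero) auto
  moreover have "block_mat 1 m (\<lambda>i j. X (i + N) (j + N)) = X N N"
    using Suc.prems(1)[of N N] block_mat_one[of "\<lambda>i j. X (i + N) (j + N)"] by simp
  ultimately show ?case using Suc by simp
qed

lemma det_block_mat_rotate_rows:
  fixes X :: "nat \<Rightarrow> nat \<Rightarrow> 'a :: comm_ring_1 mat"
  shows "det (block_mat (Suc N) m (\<lambda>i j. X (if i = 0 then N else i - 1) j)) =
    (-1) ^ (m * (N * m)) * det (block_mat (Suc N) m X)"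
proof -
  have c: "block_mat (Suc N) m X \<in> carrier_mat (m + N * m) (m + N * m)"
    using block_mat_carrier[of "Suc N" m X] by simp
  have "mat (m + N * m) (m + N * m) (\<lambda>(i, j). block_mat (Suc N) m X $$ (if i < m then i + N * m else i - m, j))
      = block_mat (Suc N) m (\<lambda>i j. X (if i = 0 then N else i - 1) j)"
  proof (rule eq_matI)
    fix i j assume ij: "i < dim_row (block_mat (Suc N) m (\<lambda>i j. X (if i = 0 then N else i - 1) j))"
      "j < dim_col (block_mat (Suc N) m (\<lambda>i j. X (if i = 0 then N else i - 1) j))"
    show "mat (m + N * m) (m + N * m) (\<lambda>(i, j). block_mat (Suc N) m X $$ (if i < m then i + N * m else i - m, j)) $$ (i, j)
        = block_mat (Suc N) m (\<lambda>i j. X (if i = 0 then N else i - 1) j) $$ (i, j)"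
    proof (cases "i < m")
      case True
      then show ?thesis using ij by (simp add: index_block_mat div_mod_add_mult_right)
    next
      case False
      moreover have "m > 0" using ij by (cases m) auto
      ultimately have "(i - m) div m = i div m - 1" "(i - m) mod m = i mod m" "i div m \<noteq> 0"
        by (auto simp: le_div_geq le_mod_geq)
      then show ?thesis using False ij by (simp add: index_block_mat)
    qed
  qed auto
  then show ?thesis using det_swap_rows[OF c] by simp
qed

section \<open>Transfer matrices\<close>

lemma minv_inverse:
  assumes X: "X \<in> carrier_mat n n" and inv: "invertible_mat X"
  shows "X * minv X = 1\<^sub>m n" "minv X * X = 1\<^sub>m n" "minv X \<in> carrier_mat n n"
proof -
  obtain Y where XY: "X * Y = 1\<^sub>m (dim_row X)" "Y * X = 1\<^sub>m (dim_row Y)"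
    using inv unfolding invertible_mat_def inverts_mat_def by blast
  have Y: "Y \<in> carrier_mat n n"
    using arg_cong[of _ _ dim_col, OF XY(1)] arg_cong[of _ _ dim_col, OF XY(2)] X by auto
  have "X \<in> Units (ring_mat TYPE(complex) n undefined)"
    using XY X Y unfolding Units_def ring_mat_def by (auto intro!: bexI[of _ Y])
  then obtain Y' where "mat_inverse X = Some Y'"
    using mat_inverse(1)[OF X, of undefined] by (cases "mat_inverse X") auto
  then show "X * minv X = 1\<^sub>m n" "minv X * X = 1\<^sub>m n" "minv X \<in> carrier_mat n n"
    unfolding minv_def using mat_inverse(2)[OF X] by auto
qed

lemma det_minv:
  assumes "X \<in> carrier_mat n n" "invertible_mat X"
  shows "det (minv X) = inverse (det X)"
  using det_mult[of X n "minv X"] minv_inverse[OF assms] assms(1) by (simp add: inverse_unique)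

lemma det_nonzero_of_invertible:
  assumes "X \<in> carrier_mat n n" "invertible_mat X"
  shows "det X \<noteq> (0 :: complex)"
  using det_mult[of X n "minv X"] minv_inverse[OF assms] assms(1) by auto

locale block_tridiagonal =
  fixes m n :: nat and A B C :: "nat \<Rightarrow> complex mat"
  assumes A_carrier: "k \<in> {1..n} \<Longrightarrow> A k \<in> carrier_mat m m"
    and B_carrier: "k \<in> {1..n} \<Longrightarrow> B k \<in> carrier_mat m m"
    and C_carrier: "k \<in> {1..n} \<Longrightarrow> C k \<in> carrier_mat m m"
    and B_invertible: "k \<in> {1..n} \<Longrightarrow> invertible_mat (B k)"
begin

fun sol :: "complex \<Rightarrow> complex mat \<Rightarrow> complex mat \<Rightarrow> nat \<Rightarrow> complex mat" where
  "sol E X0 X1 0 = X0"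
| "sol E X0 X1 (Suc 0) = X1"
| "sol E X0 X1 (Suc (Suc k)) =
     minv (B (Suc k)) * ((E \<cdot>\<^sub>m 1\<^sub>m m - A (Suc k)) * sol E X0 X1 (Suc k) - C (Suc k) * sol E X0 X1 k)"

lemma sol_carrier:
  "X0 \<in> carrier_mat m m \<Longrightarrow> X1 \<in> carrier_mat m m \<Longrightarrow> k \<le> Suc n \<Longrightarrow> sol E X0 X1 k \<in> carrier_mat m m"
proof (induct E X0 X1 k rule: sol.induct)
  case (3 E X0 X1 k)
  then have "Suc k \<in> {1..n}" by auto
  with 3 show ?case
    using C_carrier minv_inverse(3)[OF B_carrier B_invertible] by (auto intro!: mult_carrier_mat minus_carrier_mat)
qed auto

lemma B_mult_sol_Suc:
  assumes X0: "X0 \<in> carrier_mat m m" and X1: "X1 \<in> carrier_mat m m" and k: "k \<in> {1..n}"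
  shows "B k * sol E X0 X1 (Suc k) = (E \<cdot>\<^sub>m 1\<^sub>m m - A k) * sol E X0 X1 k - C k * sol E X0 X1 (k - 1)"
proof -
  obtain k' where k': "k = Suc k'" using k by (cases k) auto
  let ?R = "(E \<cdot>\<^sub>m 1\<^sub>m m - A k) * sol E X0 X1 k - C k * sol E X0 X1 k'"
  have R: "?R \<in> carrier_mat m m"
    using sol_carrier[OF X0 X1] C_carrier[OF k] k k' by (auto intro!: mult_carrier_mat minus_carrier_mat)
  have "B k * sol E X0 X1 (Suc k) = (B k * minv (B k)) * ?R"
    using minv_inverse(3)[OF B_carrier[OF k] B_invertible[OF k]] B_carrier[OF k] R
    by (simp add: k' assoc_mult_mat[of _ m m _ m _ m])
  also have "\<dots> = ?R"
    using minv_inverse(1)[OF B_carrier[OF k] B_invertible[OF k]] left_mult_one_mat[OF R] by simp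
  finally show ?thesis using k' by simp
qed

lemma tstep_carrier: "k \<in> {1..n} \<Longrightarrow> tstep m A B C k E \<in> carrier_mat (2 * m) (2 * m)"
  unfolding tstep_def mult_2
  using A_carrier C_carrier minv_inverse(3)[OF B_carrier B_invertible]
  by (intro four_block_carrier_mat) (auto intro!: mult_carrier_mat minus_carrier_mat)

lemma tprod_carrier: "k \<le> n \<Longrightarrow> tprod m A B C k E \<in> carrier_mat (2 * m) (2 * m)"
  by (induct k) (auto intro!: mult_carrier_mat tstep_carrier)

abbreviation "sol0 E \<equiv> sol E (1\<^sub>m m) (0\<^sub>m m m)"
abbreviation "sol1 E \<equiv> sol E (0\<^sub>m m m) (1\<^sub>m m)"

lemma sol01_carrier: "k \<le> Suc n \<Longrightarrow> sol0 E k \<in> carrier_mat m m"  "k \<le> Suc n \<Longrightarrow> sol1 E k \<in> carrier_mat m m"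
  by (simp_all add: sol_carrier)

lemma tprod_eq_four_block:
  "k \<le> n \<Longrightarrow> tprod m A B C k E = four_block_mat (sol1 E (Suc k)) (sol0 E (Suc k)) (sol1 E k) (sol0 E k)"
proof (induct k)
  case 0
  then show ?case by (simp add: mult_2)
next
  case (Suc k)
  have k: "Suc k \<in> {1..n}" using Suc by auto
  let ?Bi = "minv (B (Suc k))" and ?W = "E \<cdot>\<^sub>m 1\<^sub>m m - A (Suc k)" and ?C = "C (Suc k)"
  have Bi: "?Bi \<in> carrier_mat m m" by (rule minv_inverse(3)[OF B_carrier[OF k] B_invertible[OF k]])
  have W: "?W \<in> carrier_mat m m" using A_carrier[OF k] by auto
  have Cc: "?C \<in> carrier_mat m m" by (rule C_carrier[OF k])
  have step: "?Bi * ?W * Y + (- (?Bi * ?C)) * Z = ?Bi * (?W * Y - ?C * Z)"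
    if Y: "Y \<in> carrier_mat m m" and Z: "Z \<in> carrier_mat m m" for Y Z
  proof -
    have "?Bi * (?W * Y - ?C * Z) = ?Bi * (?W * Y) - ?Bi * (?C * Z)"
      using Bi W Y Z Cc by (subst mult_minus_distrib_mat) auto
    also have "\<dots> = ?Bi * (?W * Y) + - (?Bi * (?C * Z))"
      using Bi W Y Z Cc by (intro minus_add_uminus_mat[of _ m m]) auto
    also have "\<dots> = ?Bi * ?W * Y + (- (?Bi * ?C)) * Z"
      using Bi W Y Z Cc by (simp add: assoc_mult_mat[of _ m m _ m _ m])
    finally show ?thesis ..
  qed
  have c: "sol0 E (Suc k) \<in> carrier_mat m m" "sol1 E (Suc k) \<in> carrier_mat m m"
    "sol0 E k \<in> carrier_mat m m" "sol1 E k \<in> carrier_mat m m"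
    using Suc.prems by (auto intro!: sol01_carrier)
  have "tprod m A B C (Suc k) E = four_block_mat (?Bi * ?W) (- (?Bi * ?C)) (1\<^sub>m m) (0\<^sub>m m m)
      * four_block_mat (sol1 E (Suc k)) (sol0 E (Suc k)) (sol1 E k) (sol0 E k)"
    using Suc by (simp add: tstep_def)
  also have "\<dots> = four_block_mat
      (?Bi * ?W * sol1 E (Suc k) + (- (?Bi * ?C)) * sol1 E k)
      (?Bi * ?W * sol0 E (Suc k) + (- (?Bi * ?C)) * sol0 E k)
      (1\<^sub>m m * sol1 E (Suc k) + 0\<^sub>m m m * sol1 E k) (1\<^sub>m m * sol0 E (Suc k) + 0\<^sub>m m m * sol0 E k)"
    using Bi W Cc c by (intro mult_four_block_mat) auto
  also have "\<dots> = four_block_mat (sol1 E (Suc (Suc k))) (sol0 E (Suc (Suc k))) (sol1 E (Suc k)) (sol0 E (Suc k))"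
    using c by (simp add: step)
  finally show ?case .
qed

lemma det_tstep:
  assumes k: "k \<in> {1..n}"
  shows "det (tstep m A B C k E) = det (C k) / det (B k)"
proof -
  let ?X = "minv (B k) * (E \<cdot>\<^sub>m 1\<^sub>m m - A k)" and ?Y = "minv (B k) * C k"
  note Bi = minv_inverse(3)[OF B_carrier[OF k] B_invertible[OF k]]
  have X: "?X \<in> carrier_mat m m" and Y: "?Y \<in> carrier_mat m m"
    using Bi A_carrier[OF k] C_carrier[OF k] by auto
  have "det (tstep m A B C k E) = det (?X * 0\<^sub>m m m - (- ?Y) * 1\<^sub>m m)"
    unfolding tstep_def by (rule det_four_block_mat) (use X Y in auto)
  also have "?X * 0\<^sub>m m m - (- ?Y) * 1\<^sub>m m = ?Y"
  proof -
    have "0\<^sub>m m m - (- ?Y) = ?Y" using Bi C_carrier[OF k] by (intro eq_matI) auto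
    then show ?thesis using X Y by (simp add: right_mult_zero_mat[OF X] right_mult_one_mat[OF uminus_carrier_mat[OF Y]])
  qed
  also have "det ?Y = det (C k) / det (B k)"
    using Bi C_carrier[OF k] det_minv[OF B_carrier[OF k] B_invertible[OF k]]
    by (simp add: det_mult[of _ m] divide_inverse mult.commute)
  finally show ?thesis .
qed

lemma det_tprod: "k \<le> n \<Longrightarrow> det (tprod m A B C k E) = (\<Prod>i = 1..k. det (C i) / det (B i))"
proof (induct k)
  case (Suc k)
  then show ?case
    using det_mult[OF tstep_carrier[of "Suc k" E] tprod_carrier[of k E]]
    by (simp add: det_tstep atLeastAtMostSuc_conv mult.commute)
qed simp

end

section \<open>The Bloch system\<close>

lemma mult_smult_one_index:
  "(X :: 'a :: comm_ring_1 mat) \<in> carrier_mat m m \<Longrightarrow> r < m \<Longrightarrow> c < m \<Longrightarrow> (X * (a \<cdot>\<^sub>m 1\<^sub>m m)) $$ (r, c) = a * X $$ (r, c)"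
  by (simp add: mult_smult_distrib[of X m m "1\<^sub>m m"])

lemma det_four_block_mat_swap_cols:
  fixes P Q R S :: "'a :: comm_ring_1 mat"
  assumes "P \<in> carrier_mat m m" "Q \<in> carrier_mat m m" "R \<in> carrier_mat m m" "S \<in> carrier_mat m m"
  shows "det (four_block_mat Q P S R) = (-1) ^ (m * m) * det (four_block_mat P Q R S)"
proof -
  have c: "four_block_mat P Q R S \<in> carrier_mat (m + m) (m + m)"
    using assms by (intro four_block_carrier_mat)
  have "mat (m + m) (m + m) (\<lambda>(i, j). four_block_mat P Q R S $$ (i, if j < m then j + m else j - m))
      = four_block_mat Q P S R"
    using assms by (intro eq_matI) (auto simp: four_block_mat_def)
  then show ?thesis using det_swap_cols[OF c] by simp
qed

lemma four_block_mat_minus_smult_one: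
  assumes "P \<in> carrier_mat m m" "Q \<in> carrier_mat m m" "R \<in> carrier_mat m m" "S \<in> carrier_mat m m"
  shows "four_block_mat P Q R S - z \<cdot>\<^sub>m 1\<^sub>m (2 * m) =
    four_block_mat (P - z \<cdot>\<^sub>m 1\<^sub>m m) Q R (S - (z :: 'a :: ring_1) \<cdot>\<^sub>m 1\<^sub>m m)"
  using assms by (intro eq_matI) (auto simp: four_block_mat_def)

lemma sum_split_first_two:
  fixes g :: "nat \<Rightarrow> 'a :: comm_monoid_add"
  shows "(\<Sum>p = 0..k + 1. g p) = g 0 + g 1 + (\<Sum>p = 2..k + 1. g p)"
  by (simp add: sum.atLeast_Suc_atMost numeral_2_eq_2 add.assoc)

text \<open>\<open>n \<ge> 3\<close> keeps the corner blocks of \<open>Hblock\<close> apart from its tridiagonal part.\<close>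

locale periodic_block_tridiagonal = block_tridiagonal +
  assumes three_le_n: "3 \<le> n"
begin

text \<open>The block rows \<open>1..n\<close> of \<open>bloch_system E z\<close> are the equations
  \<open>C\<^sub>k \<psi>\<^sub>k\<^sub>-\<^sub>1 + (A\<^sub>k - E) \<psi>\<^sub>k + B\<^sub>k \<psi>\<^sub>k\<^sub>+\<^sub>1 = 0\<close> on the extended range \<open>0..n+1\<close>,
  the rows \<open>0\<close> and \<open>n+1\<close> the Bloch conditions \<open>\<psi>\<^sub>n = z \<psi>\<^sub>0\<close> and \<open>\<psi>\<^sub>n\<^sub>+\<^sub>1 = z \<psi>\<^sub>1\<close>;
  block column \<open>j\<close> multiplies \<open>\<psi>\<^sub>j\<close>.\<close>

definition bloch_system :: "complex \<Rightarrow> complex \<Rightarrow> nat \<Rightarrow> nat \<Rightarrow> complex mat" where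
  "bloch_system E z i j =
    (if i = 0 then (if j = 0 then (-z) \<cdot>\<^sub>m 1\<^sub>m m else if j = n then 1\<^sub>m m else 0\<^sub>m m m)
     else if i \<le> n then
       (if j + 1 = i then C i else if j = i then - (E \<cdot>\<^sub>m 1\<^sub>m m - A i) else if j = i + 1 then B i else 0\<^sub>m m m)
     else (if j = n + 1 then 1\<^sub>m m else if j = 1 then (-z) \<cdot>\<^sub>m 1\<^sub>m m else 0\<^sub>m m m))"

lemma bloch_system_carrier: "bloch_system E z i j \<in> carrier_mat m m"
  using A_carrier B_carrier C_carrier unfolding bloch_system_def by (auto intro!: minus_carrier_mat)

definition bloch_system_H :: "complex \<Rightarrow> complex \<Rightarrow> nat \<Rightarrow> nat \<Rightarrow> complex mat" where
  "bloch_system_H E z i j =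
    (if (i, j) = (0, n) \<or> (i, j) = (n + 1, 1) then 0\<^sub>m m m
     else if (i, j) = (1, n) then inverse z \<cdot>\<^sub>m C 1
     else if (i, j) = (n, 1) then z \<cdot>\<^sub>m B n
     else bloch_system E z i j)"

lemma det_bloch_system_H_eq:
  assumes z: "z \<noteq> 0"
  shows "det (block_mat (n + 2) m (bloch_system_H E z)) = det (block_mat (n + 2) m (bloch_system E z))"
proof -
  define X where "X i j = (if (i, j) = (0, n) then 0\<^sub>m m m
    else if (i, j) = (1, n) then inverse z \<cdot>\<^sub>m C 1 else bloch_system E z i j)" for i j
  have C1: "C 1 \<in> carrier_mat m m" and Bn: "B n \<in> carrier_mat m m"
    using C_carrier B_carrier three_le_n by auto
  have X: "X i j \<in> carrier_mat m m" for i j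
    using bloch_system_carrier C1 unfolding X_def by auto
  have "det (block_mat (n + 2) m X) = det (block_mat (n + 2) m (bloch_system E z))"
  proof (rule det_block_mat_add_columns[of "n + 2" "bloch_system E z" m "{0}" "\<lambda>_. inverse z \<cdot>\<^sub>m 1\<^sub>m m" n])
    fix i r c assume "i < n + 2" "r < m" "c < m"
    then show "X i n $$ (r, c) = bloch_system E z i n $$ (r, c) +
        (\<Sum>p\<in>{0}. (bloch_system E z i p * (inverse z \<cdot>\<^sub>m 1\<^sub>m m)) $$ (r, c))"
      using z C1 three_le_n bloch_system_carrier[of E z i 0]
      by (auto simp: X_def mult_smult_one_index bloch_system_def)
  qed (use bloch_system_carrier three_le_n in \<open>auto simp: X_def\<close>)
  moreover have "det (block_mat (n + 2) m (bloch_system_H E z)) = det (block_mat (n + 2) m X)"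
  proof (rule det_block_mat_add_columns[of "n + 2" X m "{n + 1}" "\<lambda>_. z \<cdot>\<^sub>m 1\<^sub>m m" 1])
    fix i r c assume "i < n + 2" "r < m" "c < m"
    then show "bloch_system_H E z i 1 $$ (r, c) = X i 1 $$ (r, c) +
        (\<Sum>p\<in>{n + 1}. (X i p * (z \<cdot>\<^sub>m 1\<^sub>m m)) $$ (r, c))"
      using z Bn three_le_n X[of i "n + 1"]
      by (auto simp: bloch_system_H_def X_def mult_smult_one_index bloch_system_def)
  qed (use X three_le_n in \<open>auto simp: bloch_system_H_def X_def\<close>)
  ultimately show ?thesis by simp
qed

lemma bloch_system_H_inner:
  "k \<in> {1..n} \<Longrightarrow> l \<in> {1..n} \<Longrightarrow>
    bloch_system_H E z k l = (if k = l then - (E \<cdot>\<^sub>m 1\<^sub>m m - A k) else Hblock n A B C z k l)"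
  using three_le_n A_carrier[of 1]
  by (auto simp: bloch_system_H_def bloch_system_def Hblock_def)

lemma block_mat_bloch_system_H_inner:
  "block_mat n m (\<lambda>i j. bloch_system_H E z (i + 1) (j + 1)) = Hmat m n A B C z - E \<cdot>\<^sub>m 1\<^sub>m (n * m)"
proof (rule eq_matI)
  fix i j assume "i < dim_row (Hmat m n A B C z - E \<cdot>\<^sub>m 1\<^sub>m (n * m))"
    "j < dim_col (Hmat m n A B C z - E \<cdot>\<^sub>m 1\<^sub>m (n * m))"
  then have ij: "i < n * m" "j < n * m" by (auto simp: Hmat_def)
  have k: "i div m + 1 \<in> {1..n}" "j div m + 1 \<in> {1..n}"
    using div_less_of_less_mult[OF ij(1)] div_less_of_less_mult[OF ij(2)] by auto
  have rc: "i mod m < m" "j mod m < m" using ij mod_less_of_less_mult by blast+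
  have "A (i div m + 1) \<in> carrier_mat m m" using A_carrier k by blast
  moreover have "(i = j) = (i div m = j div m \<and> i mod m = j mod m)"
    using eq_of_div_mod_eq by blast
  ultimately show "block_mat n m (\<lambda>i j. bloch_system_H E z (i + 1) (j + 1)) $$ (i, j) =
      (Hmat m n A B C z - E \<cdot>\<^sub>m 1\<^sub>m (n * m)) $$ (i, j)"
    using ij bloch_system_H_inner[OF k] rc by (auto simp: index_block_mat Hmat_def Hblock_def)
qed (auto simp: Hmat_def)

lemma det_bloch_system_H:
  "det (block_mat (n + 2) m (bloch_system_H E z)) = (-z) ^ m * det (Hmat m n A B C z - E \<cdot>\<^sub>m 1\<^sub>m (n * m))"
proof -
  let ?X = "bloch_system_H E z" and ?Y = "\<lambda>i j. bloch_system_H E z (i + 1) (j + 1)"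
  have "det (block_mat (1 + (n + 1)) m ?X) = det (block_mat 1 m ?X) * det (block_mat (n + 1) m ?Y)"
    using three_le_n by (intro det_block_mat_upper_right_zero) (auto simp: bloch_system_H_def bloch_system_def)
  moreover have "det (block_mat (n + 1) m ?Y) =
      det (block_mat n m ?Y) * det (block_mat 1 m (\<lambda>i j. ?Y (i + n) (j + n)))"
    using three_le_n by (intro det_block_mat_lower_left_zero) (auto simp: bloch_system_H_def bloch_system_def)
  moreover have "block_mat 1 m ?X = (-z) \<cdot>\<^sub>m 1\<^sub>m m"
    using three_le_n by (subst block_mat_one) (auto simp: bloch_system_H_def bloch_system_def)
  moreover have "block_mat 1 m (\<lambda>i j. ?Y (i + n) (j + n)) = 1\<^sub>m m"
    using three_le_n by (subst block_mat_one) (auto simp: bloch_system_H_def bloch_system_def)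
  ultimately show ?thesis using block_mat_bloch_system_H_inner[of E z] by simp
qed

lemma bloch_system_row_sol:
  assumes i: "i \<in> {1..n}" and X0: "X0 \<in> carrier_mat m m" and X1: "X1 \<in> carrier_mat m m"
    and rc: "r < m" "c < m"
  shows "(\<Sum>p = 0..n + 1. (bloch_system E z i p * sol E X0 X1 p) $$ (r, c)) = 0"
proof -
  let ?\<psi> = "sol E X0 X1" and ?W = "E \<cdot>\<^sub>m 1\<^sub>m m - A i"
  have \<psi>: "p \<le> n + 1 \<Longrightarrow> ?\<psi> p \<in> carrier_mat m m" for p using sol_carrier[OF X0 X1] by simp
  have "(\<Sum>p = 0..n + 1. (bloch_system E z i p * ?\<psi> p) $$ (r, c)) =
      (\<Sum>p\<in>{i - 1, i, i + 1}. (bloch_system E z i p * ?\<psi> p) $$ (r, c))"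
  proof (rule sum.mono_neutral_right)
    show "\<forall>p\<in>{0..n + 1} - {i - 1, i, i + 1}. (bloch_system E z i p * ?\<psi> p) $$ (r, c) = 0"
    proof
      fix p assume p: "p \<in> {0..n + 1} - {i - 1, i, i + 1}"
      then have "bloch_system E z i p = 0\<^sub>m m m" using i by (auto simp: bloch_system_def)
      then show "(bloch_system E z i p * ?\<psi> p) $$ (r, c) = 0" using \<psi>[of p] p rc by simp
    qed
  qed (use i in auto)
  also have "\<dots> = (C i * ?\<psi> (i - 1)) $$ (r, c) + ((- ?W) * ?\<psi> i) $$ (r, c) + (B i * ?\<psi> (i + 1)) $$ (r, c)"
  proof -
    have "i - 1 \<notin> {i, i + 1}" "i \<notin> {i + 1}" using i by auto
    moreover have "bloch_system E z i (i - 1) = C i" "bloch_system E z i i = - ?W" "bloch_system E z i (i + 1) = B i"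
      using i by (auto simp: bloch_system_def)
    ultimately show ?thesis by (simp add: add.assoc)
  qed
  also have "(B i * ?\<psi> (i + 1)) $$ (r, c) = (?W * ?\<psi> i) $$ (r, c) - (C i * ?\<psi> (i - 1)) $$ (r, c)"
  proof -
    have "i - 1 \<le> n + 1" using i by auto
    then have "dim_row (C i * ?\<psi> (i - 1)) = m" "dim_col (C i * ?\<psi> (i - 1)) = m"
      using C_carrier[OF i] \<psi> by auto
    then show ?thesis using B_mult_sol_Suc[OF X0 X1 i, of E] rc by simp
  qed
  also have "((- ?W) * ?\<psi> i) $$ (r, c) = - (?W * ?\<psi> i) $$ (r, c)"
    using A_carrier[OF i] \<psi>[of i] i rc by simp
  finally show ?thesis by simp
qed

lemma sum_bloch_system_boundary_row:
  assumes "i = 0 \<or> i = n + 1" and Y: "\<And>p. p \<le> n + 1 \<Longrightarrow> Y p \<in> carrier_mat m m" and rc: "r < m" "c < m"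
  shows "(\<Sum>p = 2..n + 1. (bloch_system E z i p * Y p) $$ (r, c)) = Y (if i = 0 then n else n + 1) $$ (r, c)"
proof -
  have "(\<Sum>p = 2..n + 1. (bloch_system E z i p * Y p) $$ (r, c)) =
      (\<Sum>p = 2..n + 1. if p = (if i = 0 then n else n + 1) then Y p $$ (r, c) else 0)"
  proof (rule sum.cong[OF refl])
    fix p assume p: "p \<in> {2..n + 1}"
    then have "(0\<^sub>m m m * Y p) $$ (r, c) = 0" "(1\<^sub>m m * Y p) $$ (r, c) = Y p $$ (r, c)"
      using Y[of p] rc by auto
    then show "(bloch_system E z i p * Y p) $$ (r, c) = (if p = (if i = 0 then n else n + 1) then Y p $$ (r, c) else 0)"
      using assms(1) p three_le_n by (auto simp: bloch_system_def)
  qed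
  also have "\<dots> = Y (if i = 0 then n else n + 1) $$ (r, c)" using three_le_n by simp
  finally show ?thesis .
qed

definition bloch_system_sol0 :: "complex \<Rightarrow> complex \<Rightarrow> nat \<Rightarrow> nat \<Rightarrow> complex mat" where
  "bloch_system_sol0 E z i j =
    (if j = 0 then (if i = 0 then sol0 E n - z \<cdot>\<^sub>m 1\<^sub>m m else if i = n + 1 then sol0 E (n + 1) else 0\<^sub>m m m)
     else bloch_system E z i j)"

definition bloch_system_transfer :: "complex \<Rightarrow> complex \<Rightarrow> nat \<Rightarrow> nat \<Rightarrow> complex mat" where
  "bloch_system_transfer E z i j =
    (if j = 1 then (if i = 0 then sol1 E n else if i = n + 1 then sol1 E (n + 1) - z \<cdot>\<^sub>m 1\<^sub>m m else 0\<^sub>m m m)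
     else bloch_system_sol0 E z i j)"

lemma bloch_system_sol0_carrier: "bloch_system_sol0 E z i j \<in> carrier_mat m m"
  using bloch_system_carrier sol01_carrier unfolding bloch_system_sol0_def by auto

lemma det_bloch_system_sol0_eq:
  "det (block_mat (n + 2) m (bloch_system_sol0 E z)) = det (block_mat (n + 2) m (bloch_system E z))"
proof (rule det_block_mat_add_columns[of "n + 2" "bloch_system E z" m "{2..n + 1}" "sol0 E" 0])
  fix i r c assume i: "i < n + 2" and rc: "r < m" "c < m"
  let ?g = "\<lambda>p. (bloch_system E z i p * sol0 E p) $$ (r, c)"
  show "bloch_system_sol0 E z i 0 $$ (r, c) = bloch_system E z i 0 $$ (r, c) + sum ?g {2..n + 1}"
  proof (cases "i = 0 \<or> i = n + 1")
    case True
    have "sum ?g {2..n + 1} = sol0 E (if i = 0 then n else n + 1) $$ (r, c)"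
      by (rule sum_bloch_system_boundary_row[OF True sol01_carrier(1) rc]) simp
    then show ?thesis using True sol01_carrier rc three_le_n
      by (auto simp: bloch_system_sol0_def bloch_system_def)
  next
    case False
    then have "i \<in> {1..n}" using i by auto
    from bloch_system_row_sol[OF this one_carrier_mat zero_carrier_mat rc, of E z]
    have "?g 0 + ?g 1 + sum ?g {2..n + 1} = 0"
      by (simp only: sum_split_first_two)
    moreover have "?g 0 = bloch_system E z i 0 $$ (r, c)" "?g 1 = 0"
      using rc by (simp_all add: right_mult_one_mat[OF bloch_system_carrier] right_mult_zero_mat[OF bloch_system_carrier])
    moreover have "bloch_system_sol0 E z i 0 $$ (r, c) = 0" using False rc by (simp add: bloch_system_sol0_def)
    ultimately show ?thesis by (simp only: add_0_right)
  qed
qed (use bloch_system_carrier sol01_carrier in \<open>auto simp: bloch_system_sol0_def\<close>)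

lemma det_bloch_system_transfer_eq:
  "det (block_mat (n + 2) m (bloch_system_transfer E z)) = det (block_mat (n + 2) m (bloch_system E z))"
  unfolding det_bloch_system_sol0_eq[symmetric]
proof (rule det_block_mat_add_columns[of "n + 2" "bloch_system_sol0 E z" m "{2..n + 1}" "sol1 E" 1])
  fix i r c assume i: "i < n + 2" and rc: "r < m" "c < m"
  let ?g = "\<lambda>p. (bloch_system E z i p * sol1 E p) $$ (r, c)"
  have "(\<Sum>p = 2..n + 1. (bloch_system_sol0 E z i p * sol1 E p) $$ (r, c)) = sum ?g {2..n + 1}"
    by (intro sum.cong) (auto simp: bloch_system_sol0_def)
  moreover have "bloch_system_transfer E z i 1 $$ (r, c) = bloch_system_sol0 E z i 1 $$ (r, c) + sum ?g {2..n + 1}"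
  proof (cases "i = 0 \<or> i = n + 1")
    case True
    have "sum ?g {2..n + 1} = sol1 E (if i = 0 then n else n + 1) $$ (r, c)"
      by (rule sum_bloch_system_boundary_row[OF True sol01_carrier(2) rc]) simp
    then show ?thesis using True sol01_carrier rc three_le_n
      by (auto simp: bloch_system_sol0_def bloch_system_transfer_def bloch_system_def)
  next
    case False
    then have "i \<in> {1..n}" using i by auto
    from bloch_system_row_sol[OF this zero_carrier_mat one_carrier_mat rc, of E z]
    have "?g 0 + ?g 1 + sum ?g {2..n + 1} = 0"
      by (simp only: sum_split_first_two)
    moreover have "?g 0 = 0" "?g 1 = bloch_system_sol0 E z i 1 $$ (r, c)"
      using rc by (simp_all add: bloch_system_sol0_def right_mult_one_mat[OF bloch_system_carrier]
          right_mult_zero_mat[OF bloch_system_carrier])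
    moreover have "bloch_system_transfer E z i 1 $$ (r, c) = 0"
      using False rc by (simp add: bloch_system_transfer_def)
    ultimately show ?thesis by (simp only: add_0_left)
  qed
  ultimately show "bloch_system_transfer E z i 1 $$ (r, c) =
      bloch_system_sol0 E z i 1 $$ (r, c) + (\<Sum>p = 2..n + 1. (bloch_system_sol0 E z i p * sol1 E p) $$ (r, c))"
    by simp
qed (use bloch_system_sol0_carrier sol01_carrier in \<open>auto simp: bloch_system_transfer_def\<close>)

lemma det_bloch_system_transfer:
  "det (block_mat (n + 2) m (bloch_system_transfer E z)) =
    (-1) ^ (m * n) * det (tprod m A B C n E - z \<cdot>\<^sub>m 1\<^sub>m (2 * m)) * (\<Prod>k = 1..n. det (B k))"
proof -
  let ?X = "bloch_system_transfer E z"
  let ?R = "\<lambda>i j. ?X (if i = 0 then n + 1 else i - 1) j"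
  have sol: "sol0 E n \<in> carrier_mat m m" "sol0 E (n + 1) \<in> carrier_mat m m"
    "sol1 E n \<in> carrier_mat m m" "sol1 E (n + 1) \<in> carrier_mat m m"
    by (simp_all add: sol01_carrier)
  have rotate: "det (block_mat (Suc (n + 1)) m ?R) = (-1) ^ (m * ((n + 1) * m)) * det (block_mat (n + 2) m ?X)"
    using det_block_mat_rotate_rows[where N = "n + 1" and m = m and X = ?X] by simp
  have "det (block_mat (2 + n) m ?R) = det (block_mat 2 m ?R) * det (block_mat n m (\<lambda>i j. ?R (i + 2) (j + 2)))"
    by (intro det_block_mat_lower_left_zero) (auto simp: bloch_system_transfer_def bloch_system_sol0_def)
  also have "block_mat 2 m ?R = four_block_mat (sol0 E (n + 1)) (sol1 E (n + 1) - z \<cdot>\<^sub>m 1\<^sub>m m)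
      (sol0 E n - z \<cdot>\<^sub>m 1\<^sub>m m) (sol1 E n)"
    using sol by (subst block_mat_two) (auto simp: bloch_system_transfer_def bloch_system_sol0_def)
  also have "det \<dots> = (-1) ^ (m * m) * det (four_block_mat (sol1 E (n + 1) - z \<cdot>\<^sub>m 1\<^sub>m m) (sol0 E (n + 1))
      (sol1 E n) (sol0 E n - z \<cdot>\<^sub>m 1\<^sub>m m))"
    using sol by (intro det_four_block_mat_swap_cols) (auto intro!: minus_carrier_mat)
  also have "four_block_mat (sol1 E (n + 1) - z \<cdot>\<^sub>m 1\<^sub>m m) (sol0 E (n + 1)) (sol1 E n) (sol0 E n - z \<cdot>\<^sub>m 1\<^sub>m m)
      = tprod m A B C n E - z \<cdot>\<^sub>m 1\<^sub>m (2 * m)"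
    using sol by (simp add: tprod_eq_four_block four_block_mat_minus_smult_one)
  also have "(\<lambda>i j. ?R (i + 2) (j + 2)) = (\<lambda>i j. bloch_system E z (i + 1) (j + 2))"
    by (simp add: bloch_system_transfer_def bloch_system_sol0_def)
  also have "det (block_mat n m (\<lambda>i j. bloch_system E z (i + 1) (j + 2))) =
      (\<Prod>i<n. det (bloch_system E z (i + 1) (i + 2)))"
    by (intro det_block_mat_lower_triangular bloch_system_carrier) (auto simp: bloch_system_def)
  also have "\<dots> = (\<Prod>k = 1..n. det (B k))"
    by (simp add: bloch_system_def prod.atLeast1_atMost_eq)
  finally have "det (block_mat (n + 2) m ?X) = (-1) ^ (m * ((n + 1) * m) + m * m) *
      det (tprod m A B C n E - z \<cdot>\<^sub>m 1\<^sub>m (2 * m)) * (\<Prod>k = 1..n. det (B k))"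
    using rotate by (simp add: power_add algebra_simps)
  moreover have "(-1 :: complex) ^ (m * ((n + 1) * m) + m * m) = (-1) ^ (m * n)"
    by (simp add: minus_one_power_iff algebra_simps)
  ultimately show ?thesis by simp
qed

theorem det_Hmat_minus_eq_det_transfer:
  assumes "z \<noteq> 0"
  shows "(-z) ^ m * det (Hmat m n A B C z - E \<cdot>\<^sub>m 1\<^sub>m (n * m)) =
    (-1) ^ (m * n) * det (transfer m n A B C E - z \<cdot>\<^sub>m 1\<^sub>m (2 * m)) * (\<Prod>k = 1..n. det (B k))"
  using det_bloch_system_H[of E z] det_bloch_system_H_eq[OF assms, of E] det_bloch_system_transfer_eq[of E z]
    det_bloch_system_transfer[of E z]
  by (simp add: transfer_def)

end

section \<open>Jensen's formula on a circle\<close>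

lemma has_integral_exp_imaginary_multiple:
  assumes "k \<ge> 1"
  shows "((\<lambda>t::real. exp (t *\<^sub>R (\<i> * of_nat k))) has_integral 0) {0..2 * pi}"
proof -
  let ?a = "\<i> * (of_nat k :: complex)"
  have a: "?a \<noteq> 0" using assms by simp
  have "((\<lambda>t. exp (t *\<^sub>R ?a) * ?a) has_integral (exp ((2 * pi) *\<^sub>R ?a) - exp (0 *\<^sub>R ?a))) {0..2 * pi}"
    by (rule fundamental_theorem_of_calculus) (auto intro: exp_scaleR_has_vector_derivative_right)
  moreover have "exp ((2 * pi) *\<^sub>R ?a) = 1"
  proof -
    have "(2 * pi) *\<^sub>R ?a = of_nat k * (2 * of_real pi * \<i>)" by (simp add: scaleR_conv_of_real)
    then show ?thesis by (simp only: exp_of_nat_mult exp_two_pi_i power_one)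
  qed
  ultimately have "((\<lambda>t. exp (t *\<^sub>R ?a) * ?a / ?a) has_integral 0 / ?a) {0..2 * pi}"
    by (intro has_integral_divide) simp
  then show ?thesis using a by simp
qed

lemma has_integral_power_exp_circle:
  assumes "k \<ge> 1"
  shows "((\<lambda>t. (c * exp (\<i> * of_real t)) ^ k) has_integral 0) {0..2 * pi}"
proof -
  have "(c * exp (\<i> * of_real t)) ^ k = c ^ k * exp (t *\<^sub>R (\<i> * of_nat k))" for t
    unfolding power_mult_distrib exp_of_nat_mult[symmetric] by (simp add: scaleR_conv_of_real algebra_simps)
  then show ?thesis
    using has_integral_mult_right[OF has_integral_exp_imaginary_multiple[OF assms], of "c ^ k"] by simp
qed

lemma has_integral_Ln_one_minus_circle:
  assumes c: "cmod c < 1"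
  shows "((\<lambda>t. Ln (1 - c * exp (\<i> * of_real t))) has_integral 0) {0..2 * pi}"
proof -
  define f where "f k t = - ((c * exp (\<i> * of_real t)) ^ k) / of_nat k" for k t
  have f_sums: "(\<lambda>k. f k t) sums Ln (1 - c * exp (\<i> * of_real t))" for t
    using Ln_series'[of "- (c * exp (\<i> * of_real t))"] c unfolding f_def by (simp add: norm_mult)
  have f_bound: "norm (f k t) \<le> cmod c ^ k" for k t
  proof (cases k)
    case (Suc j)
    have "norm (f k t) = cmod c ^ k / real k" unfolding f_def
      by (simp add: norm_divide norm_power norm_mult)
    also have "\<dots> \<le> cmod c ^ k / 1" by (rule divide_left_mono) (use Suc in auto)
    finally show ?thesis by simp
  qed (simp add: f_def)
  have "summable (\<lambda>k. cmod c ^ k)" using c by (simp add: summable_geometric)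
  then have unif: "uniform_limit {0..2 * pi} (\<lambda>N t. \<Sum>k<N. f k t) (\<lambda>t. \<Sum>k. f k t) sequentially"
    using f_bound by (intro Weierstrass_m_test) auto
  have cont: "continuous_on {0..2 * pi} (\<lambda>t. \<Sum>k<N. f k t)" for N
    unfolding f_def divide_inverse by (intro continuous_intros)
  obtain I J where I: "\<And>N. ((\<lambda>t. \<Sum>k<N. f k t) has_integral I N) {0..2 * pi}"
    and J: "((\<lambda>t. \<Sum>k. f k t) has_integral J) {0..2 * pi}" and IJ: "I \<longlonglongrightarrow> J"
    by (rule uniform_limit_integral[OF unif cont]) auto
  have f_int: "(f k has_integral 0) {0..2 * pi}" for k
    using has_integral_divide[OF has_integral_neg[OF has_integral_power_exp_circle[of k c]], of "of_nat k"]
    by (cases k) (simp_all add: f_def[abs_def])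
  have "I N = 0" for N
    using has_integral_unique[OF I[of N] has_integral_sum[OF _ f_int, of "{..<N}"]] by simp
  then have "I = (\<lambda>_. 0)" by (simp add: fun_eq_iff)
  then have "J = 0" using IJ LIMSEQ_const_iff[of 0 J] by simp
  then show ?thesis using J f_sums by (simp add: sums_iff)
qed

lemma has_integral_ln_norm_one_minus_circle_inside:
  assumes c: "cmod c < 1"
  shows "((\<lambda>t. ln (cmod (1 - c * exp (\<i> * of_real t)))) has_integral 0) {0..2 * pi}"
proof -
  have "1 - c * exp (\<i> * of_real t) \<noteq> 0" for t
  proof
    assume "1 - c * exp (\<i> * of_real t) = 0"
    then have "c * exp (\<i> * of_real t) = 1" by simp
    then have "cmod (c * exp (\<i> * of_real t)) = 1" by simp
    then show False using c by (simp add: norm_mult)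
  qed
  then show ?thesis
    using has_integral_linear[OF has_integral_Ln_one_minus_circle[OF c] bounded_linear_Re] by (simp add: o_def)
qed

lemma finite_unit_circle_preimage: "finite {t \<in> {0..2 * pi}. exp (\<i> * of_real t) = w}"
proof (cases "\<exists>t0 \<in> {0..2 * pi}. exp (\<i> * of_real t0) = w")
  case True
  then obtain t0 where t0: "t0 \<in> {0..2 * pi}" "exp (\<i> * of_real t0) = w" by blast
  have "{t \<in> {0..2 * pi}. exp (\<i> * of_real t) = w} \<subseteq> {t0 - 2 * pi, t0, t0 + 2 * pi}"
  proof
    fix t assume t: "t \<in> {t \<in> {0..2 * pi}. exp (\<i> * of_real t) = w}"
    then have "exp (\<i> * of_real t) = exp (\<i> * of_real t0)" using t0 by simp
    then obtain k :: int where "\<i> * of_real t = \<i> * of_real t0 + (of_int (2 * k) * pi) * \<i>"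
      unfolding exp_eq by blast
    then have "Im (\<i> * of_real t) = Im (\<i> * of_real t0 + (of_int (2 * k) * pi) * \<i>)" by simp
    then have tk: "t = t0 + 2 * k * pi" by simp
    have "\<bar>2 * k * pi\<bar> \<le> 2 * pi" using t t0 tk by auto
    then have "\<bar>real_of_int k\<bar> \<le> 1" by (simp add: abs_mult)
    then have "k \<in> {-1, 0, 1}" by auto
    then show "t \<in> {t0 - 2 * pi, t0, t0 + 2 * pi}" using tk by auto
  qed
  then show ?thesis by (rule finite_subset) simp
next
  case False
  then have "{t \<in> {0..2 * pi}. exp (\<i> * of_real t) = w} = {}" by blast
  then show ?thesis by (simp only: finite.emptyI)
qed

lemma norm_one_minus_real_mult_unit_sq:
  fixes w :: complex and s :: real
  assumes "cmod w = 1"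
  shows "cmod (1 - s * w) ^ 2 = (1 - s) ^ 2 + s * cmod (1 - w) ^ 2"
proof -
  have w: "Re w ^ 2 + Im w ^ 2 = 1" using assms by (simp add: cmod_def)
  have "cmod (1 - s * w) ^ 2 = (1 - s * Re w) ^ 2 + (s * Im w) ^ 2" by (simp add: cmod_power2)
  also have "\<dots> = 1 - 2 * s * Re w + s ^ 2 * (Re w ^ 2 + Im w ^ 2)"
    by (simp add: power2_eq_square algebra_simps)
  also have "\<dots> = (1 - s) ^ 2 + s * (1 - 2 * Re w + (Re w ^ 2 + Im w ^ 2))"
    using w by (simp add: power2_eq_square algebra_simps)
  also have "1 - 2 * Re w + (Re w ^ 2 + Im w ^ 2) = (1 - Re w) ^ 2 + Im w ^ 2"
    by (simp add: power2_eq_square algebra_simps)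
  also have "(1 - Re w) ^ 2 + Im w ^ 2 = cmod (1 - w) ^ 2" by (simp add: cmod_power2)
  finally show ?thesis .
qed

text \<open>For \<open>|c| = 1\<close> the integrand has a logarithmic singularity; it is approached from above
  through \<open>|1 - s c e\<^sup>i\<^sup>t|\<^sup>2 / s = (1 - s)\<^sup>2 / s + |1 - c e\<^sup>i\<^sup>t|\<^sup>2\<close> with \<open>s \<rightarrow> 1\<close>.\<close>

lemma has_integral_ln_regularized:
  assumes c: "cmod c = 1" and s: "0 < s" "s < 1"
  shows "((\<lambda>t. ln ((1 - s) ^ 2 / s + cmod (1 - c * exp (\<i> * of_real t)) ^ 2)) has_integral
    - (2 * pi) * ln s) {0..2 * pi}"
proof -
  have eq: "ln ((1 - s) ^ 2 / s + cmod (1 - c * exp (\<i> * of_real t)) ^ 2) =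
      2 * ln (cmod (1 - (of_real s * c) * exp (\<i> * of_real t))) - ln s" for t
  proof -
    let ?w = "c * exp (\<i> * of_real t)"
    have w: "cmod ?w = 1" using c by (simp add: norm_mult)
    have "cmod (1 - (of_real s * c) * exp (\<i> * of_real t)) > 0"
    proof -
      have "cmod ((of_real s * c) * exp (\<i> * of_real t)) < 1" using s c by (simp add: norm_mult)
      then show ?thesis by (auto simp: right_minus_eq)
    qed
    moreover have "(1 - s) ^ 2 / s + cmod (1 - ?w) ^ 2 = cmod (1 - (of_real s * c) * exp (\<i> * of_real t)) ^ 2 / s"
      using norm_one_minus_real_mult_unit_sq[OF w, of s] s by (simp add: field_simps mult.assoc)
    ultimately show ?thesis using s by (simp add: ln_div ln_realpow)
  qed
  have "cmod (of_real s * c) < 1" using s c by (simp add: norm_mult)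
  from has_integral_diff[OF has_integral_cmult_real[OF has_integral_ln_norm_one_minus_circle_inside[OF this], of 2]
      has_integral_const_real[of "ln s" 0 "2 * pi"]]
  show ?thesis by (simp add: eq)
qed

lemma has_integral_ln_regularization_limit:
  fixes u :: "'n :: euclidean_space \<Rightarrow> real"
  assumes u: "\<And>x. x \<in> S \<Longrightarrow> 0 < u x"
    and eps: "\<And>k. 0 < eps k" "decseq eps" "eps \<longlonglongrightarrow> 0"
    and int: "\<And>k. ((\<lambda>x. ln (eps k + u x)) has_integral I k) S" and lim: "I \<longlonglongrightarrow> L"
  shows "((\<lambda>x. ln (u x)) has_integral L) S"
proof -
  have "(\<lambda>x. ln (u x)) integrable_on S \<and>
      (\<lambda>k. integral S (\<lambda>x. ln (eps k + u x))) \<longlonglongrightarrow> integral S (\<lambda>x. ln (u x))"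
  proof (rule monotone_convergence_decreasing)
    show "(\<lambda>x. ln (eps k + u x)) integrable_on S" for k using int by blast
    show "ln (eps (Suc k) + u x) \<le> ln (eps k + u x)" if "x \<in> S" for k x
    proof -
      have "0 < eps (Suc k) + u x" using u[OF that] eps(1)[of "Suc k"] by linarith
      moreover have "eps (Suc k) + u x \<le> eps k + u x" using decseq_SucD[OF eps(2), of k] by linarith
      ultimately show ?thesis by (subst ln_le_cancel_iff) auto
    qed
    show "(\<lambda>k. ln (eps k + u x)) \<longlonglongrightarrow> ln (u x)" if "x \<in> S" for x
      using u[OF that] tendsto_add[OF eps(3) tendsto_const[of "u x"]] by (intro tendsto_ln) auto
    show "bounded (range (\<lambda>k. integral S (\<lambda>x. ln (eps k + u x))))"
      using integral_unique[OF int] convergent_imp_Bseq[OF convergentI[OF lim]]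
      by (simp add: Elementary_Normed_Spaces.Bseq_eq_bounded)
  qed
  moreover have "(\<lambda>k. integral S (\<lambda>x. ln (eps k + u x))) = I"
    using integral_unique[OF int] by simp
  ultimately have "(\<lambda>x. ln (u x)) integrable_on S" "integral S (\<lambda>x. ln (u x)) = L"
    using LIMSEQ_unique[OF _ lim] by auto
  then show ?thesis by (metis has_integral_integral)
qed

lemma has_integral_ln_norm_one_minus_circle_boundary:
  assumes c: "cmod c = 1"
  shows "((\<lambda>t. ln (cmod (1 - c * exp (\<i> * of_real t)))) has_integral 0) {0..2 * pi}"
proof -
  define u where "u t = cmod (1 - c * exp (\<i> * of_real t)) ^ 2" for t
  define S where "S = {0..2 * pi} - {t \<in> {0..2 * pi}. exp (\<i> * of_real t) = inverse c}"
  have spike: "(g has_integral y) {0..2 * pi} \<longleftrightarrow> (g has_integral y) S" for g :: "real \<Rightarrow> real" and y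
    using finite_unit_circle_preimage[of "inverse c"] unfolding S_def
    by (intro has_integral_spike_set_eq) (auto intro: negligible_finite negligible_subset)
  have u_pos: "u t > 0" if "t \<in> S" for t
  proof -
    have "c * exp (\<i> * of_real t) \<noteq> 1"
      using that by (auto simp: S_def inverse_unique)
    then show ?thesis unfolding u_def by simp
  qed
  define s :: "nat \<Rightarrow> real" where "s k = real (Suc k) / real (Suc (Suc k))" for k
  have s: "0 < s k" "s k < 1" for k
    unfolding s_def by simp_all
  have s_lim: "s \<longlonglongrightarrow> 1"
    unfolding s_def using LIMSEQ_Suc[OF LIMSEQ_n_over_Suc_n[where 'a = real]] by simp
  define eps :: "nat \<Rightarrow> real" where "eps k = 1 / ((real k + 1) * (real k + 2))" for k
  have eps_s: "eps k = (1 - s k) ^ 2 / s k" for k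
  proof -
    have "1 - s k = 1 / (real k + 2)" "s k = (real k + 1) / (real k + 2)"
      unfolding s_def by (simp_all add: field_simps)
    moreover have "(1 / b) ^ 2 / (a / b) = 1 / (a * b)" if "a > 0" "b > 0" for a b :: real
      using that by (simp add: power2_eq_square)
    ultimately show ?thesis by (simp add: eps_def)
  qed
  have "((\<lambda>t. ln (u t)) has_integral 0) S"
  proof (rule has_integral_ln_regularization_limit)
    show "0 < eps k" for k by (simp add: eps_def)
    show "decseq eps"
      unfolding decseq_Suc_iff eps_def by (intro allI divide_left_mono mult_mono) auto
    have "(\<lambda>k. (1 - s k) ^ 2 / s k) \<longlonglongrightarrow> (1 - 1) ^ 2 / 1"
      by (intro tendsto_intros s_lim) simp
    then show "eps \<longlonglongrightarrow> 0" by (simp add: eps_s[abs_def])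
    show "((\<lambda>t. ln (eps k + u t)) has_integral - (2 * pi) * ln (s k)) S" for k
      using spike has_integral_ln_regularized[OF c s, of k] unfolding eps_s u_def by simp
    show "(\<lambda>k. - (2 * pi) * ln (s k)) \<longlonglongrightarrow> 0"
      using tendsto_mult[OF tendsto_const tendsto_ln[OF s_lim], of "- (2 * pi)"] by simp
  qed (use u_pos in auto)
  then have "((\<lambda>t. ln (u t) / 2) has_integral 0 / 2) S" by (rule has_integral_divide)
  moreover have "ln (u t) / 2 = ln (cmod (1 - c * exp (\<i> * of_real t)))" if "t \<in> S" for t
    using u_pos[OF that] unfolding u_def by (simp add: ln_realpow)
  ultimately have "((\<lambda>t. ln (cmod (1 - c * exp (\<i> * of_real t)))) has_integral 0) S"
    by (subst has_integral_cong[symmetric]) auto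
  then show ?thesis using spike by blast
qed

lemma has_integral_ln_norm_one_minus_circle:
  "cmod c \<le> 1 \<Longrightarrow> ((\<lambda>t. ln (cmod (1 - c * exp (\<i> * of_real t)))) has_integral 0) {0..2 * pi}"
  using has_integral_ln_norm_one_minus_circle_inside has_integral_ln_norm_one_minus_circle_boundary
  by (cases "cmod c < 1") auto

lemma norm_circle_minus_factor:
  assumes r: "0 < r" and a: "a \<noteq> 0"
  obtains c where "cmod c \<le> 1"
    "\<And>t. cmod (of_real r * exp (\<i> * of_real t) - a) = max r (cmod a) * cmod (1 - c * exp (\<i> * of_real t))"
proof (cases "cmod a \<le> r")
  case True
  show ?thesis
  proof (rule that[of "cnj a / of_real r"])
    show "cmod (cnj a / of_real r) \<le> 1" using True r by (simp add: norm_divide)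
    fix t
    let ?e = "exp (\<i> * of_real t)"
    have e: "cnj ?e * ?e = 1" "cmod ?e = 1" by (simp_all add: exp_cnj exp_minus[symmetric] exp_add[symmetric])
    have "cnj (of_real r * ?e - a) * ?e = of_real r * (1 - cnj a / of_real r * ?e)"
      using r e(1) by (simp add: algebra_simps)
    then have "cmod (of_real r * ?e - a) = r * cmod (1 - cnj a / of_real r * ?e)"
      using r e(2) by (metis complex_mod_cnj norm_mult norm_of_real abs_of_pos mult_1_right)
    then show "cmod (of_real r * ?e - a) = max r (cmod a) * cmod (1 - cnj a / of_real r * ?e)"
      using True by simp
  qed
next
  case False
  show ?thesis
  proof (rule that[of "of_real r / a"])
    show "cmod (of_real r / a) \<le> 1" using False r by (simp add: norm_divide divide_le_eq_1)
    fix t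
    have "of_real r * exp (\<i> * of_real t) - a = - a * (1 - of_real r / a * exp (\<i> * of_real t))"
      using a by (simp add: field_simps)
    then show "cmod (of_real r * exp (\<i> * of_real t) - a) = max r (cmod a) * cmod (1 - of_real r / a * exp (\<i> * of_real t))"
      using False by (simp add: norm_mult)
  qed
qed

lemma jensen_linear_factor:
  assumes r: "0 < r" and a: "a \<noteq> 0"
  shows "((\<lambda>t. ln (cmod (of_real r * exp (\<i> * of_real t) - a))) has_integral
    2 * pi * max (ln r) (ln (cmod a))) {0..2 * pi}"
proof -
  obtain c where c: "cmod c \<le> 1"
    and eq: "\<And>t. cmod (of_real r * exp (\<i> * of_real t) - a) = max r (cmod a) * cmod (1 - c * exp (\<i> * of_real t))"
    using norm_circle_minus_factor[OF r a] by blast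
  have max_pos: "0 < max r (cmod a)" using r by simp
  have "ln (max r (cmod a)) = max (ln r) (ln (cmod a))" using r a by (auto simp: max_def)
  then have int: "((\<lambda>t. ln (max r (cmod a)) + ln (cmod (1 - c * exp (\<i> * of_real t)))) has_integral
      2 * pi * max (ln r) (ln (cmod a))) {0..2 * pi}"
    using has_integral_add[OF has_integral_const_real has_integral_ln_norm_one_minus_circle[OF c]] by simp
  show ?thesis
  proof (rule has_integral_spike_finite[OF finite_unit_circle_preimage[of "inverse c"] _ int])
    fix t assume "t \<in> {0..2 * pi} - {t \<in> {0..2 * pi}. exp (\<i> * of_real t) = inverse c}"
    then have "c * exp (\<i> * of_real t) \<noteq> 1" by (auto simp: inverse_unique)
    then show "ln (cmod (of_real r * exp (\<i> * of_real t) - a)) =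
        ln (max r (cmod a)) + ln (cmod (1 - c * exp (\<i> * of_real t)))"
      using max_pos by (simp add: eq ln_mult)
  qed
qed

lemma norm_prod_list_map:
  fixes f :: "'a \<Rightarrow> 'b :: real_normed_field"
  shows "norm (\<Prod>x\<leftarrow>xs. f x) = (\<Prod>x\<leftarrow>xs. norm (f x))"
  by (induct xs) (simp_all add: norm_mult)

lemma ln_prod_list:
  fixes f :: "'a \<Rightarrow> real"
  shows "(\<And>z. z \<in> set zs \<Longrightarrow> f z \<noteq> 0) \<Longrightarrow> ln (\<Prod>z\<leftarrow>zs. f z) = (\<Sum>z\<leftarrow>zs. ln (f z))"
  by (induct zs) (auto simp: ln_mult prod_list_zero_iff)

lemma has_integral_sum_list:
  "(\<And>z. z \<in> set zs \<Longrightarrow> (f z has_integral I z) S) \<Longrightarrow>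
    ((\<lambda>x. \<Sum>z\<leftarrow>zs. f z x) has_integral (\<Sum>z\<leftarrow>zs. I z)) S"
  by (induct zs) (simp_all add: has_integral_add)

lemma jensen_prod_linear_factors:
  assumes r: "0 < r" and b: "0 < b" and zs: "0 \<notin> set zs"
  shows "((\<lambda>t. ln (b * (\<Prod>z\<leftarrow>zs. cmod (of_real r * exp (\<i> * of_real t) - z)))) has_integral
    2 * pi * (ln b + (\<Sum>z\<leftarrow>zs. max (ln r) (ln (cmod z))))) {0..2 * pi}"
proof -
  let ?Z = "\<Union>z\<in>set zs. {t \<in> {0..2 * pi}. exp (\<i> * of_real t) = z / of_real r}"
  have "((\<lambda>t. ln b + (\<Sum>z\<leftarrow>zs. ln (cmod (of_real r * exp (\<i> * of_real t) - z)))) has_integral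
      2 * pi * ln b + (\<Sum>z\<leftarrow>zs. 2 * pi * max (ln r) (ln (cmod z)))) {0..2 * pi}"
    using zs has_integral_const_real[of "ln b" 0 "2 * pi"]
    by (intro has_integral_add has_integral_sum_list jensen_linear_factor[OF r]) (auto simp: mult.commute)
  then have int: "((\<lambda>t. ln b + (\<Sum>z\<leftarrow>zs. ln (cmod (of_real r * exp (\<i> * of_real t) - z)))) has_integral
      2 * pi * (ln b + (\<Sum>z\<leftarrow>zs. max (ln r) (ln (cmod z))))) {0..2 * pi}"
    by (simp add: sum_list_const_mult distrib_left)
  show ?thesis
  proof (rule has_integral_spike_finite[OF _ _ int])
    show "finite ?Z" using finite_unit_circle_preimage by auto
    fix t assume t: "t \<in> {0..2 * pi} - ?Z"
    have "cmod (of_real r * exp (\<i> * of_real t) - z) \<noteq> 0" if "z \<in> set zs" for z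
    proof -
      have "exp (\<i> * of_real t) \<noteq> z / of_real r" using t that by auto
      then show ?thesis using r by (auto simp: field_simps)
    qed
    then show "ln (b * (\<Prod>z\<leftarrow>zs. cmod (of_real r * exp (\<i> * of_real t) - z))) =
        ln b + (\<Sum>z\<leftarrow>zs. ln (cmod (of_real r * exp (\<i> * of_real t) - z)))"
      using b by (auto simp: ln_mult ln_prod_list prod_list_zero_iff)
  qed
qed

section \<open>Eigenvalues of the transfer matrix and the theorem\<close>

lemma det_minus_smult_one_char_poly:
  fixes M :: "complex mat"
  assumes M: "M \<in> carrier_mat k k" and cp: "char_poly M = (\<Prod>z\<leftarrow>zs. [:- z, 1:])"
  shows "det (M - w \<cdot>\<^sub>m 1\<^sub>m k) = (-1) ^ k * (\<Prod>z\<leftarrow>zs. w - z)"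
proof -
  have "- char_matrix M w = (-1) \<cdot>\<^sub>m (M - w \<cdot>\<^sub>m 1\<^sub>m k)"
    using M unfolding char_matrix_def by (intro eq_matI) auto
  then have "poly (char_poly M) w = (-1) ^ k * det (M - w \<cdot>\<^sub>m 1\<^sub>m k)"
    using char_poly_matrix[OF M] M by simp
  moreover have "poly (char_poly M) w = (\<Prod>z\<leftarrow>zs. w - z)"
    unfolding cp poly_prod_list by (simp add: o_def)
  ultimately show ?thesis by simp
qed

lemma sum_list_max_split:
  fixes a \<xi> :: real and f :: "'a \<Rightarrow> real"
  assumes "0 < a"
  shows "(\<Sum>z\<leftarrow>zs. max (a * \<xi>) (f z)) =
    (\<Sum>z\<leftarrow>zs. f z) + a * (\<Sum>z\<leftarrow>zs. if f z / a < \<xi> then \<xi> - f z / a else 0)"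
proof -
  have "max (a * \<xi>) (f z) = f z + a * (if f z / a < \<xi> then \<xi> - f z / a else 0)" for z
    using assms by (auto simp: field_simps max_def)
  then show ?thesis by (simp add: sum_list_addf sum_list_const_mult)
qed

context block_tridiagonal
begin

lemma transfer_carrier: "transfer m n A B C E \<in> carrier_mat (2 * m) (2 * m)"
  unfolding transfer_def by (rule tprod_carrier) simp

lemma det_transfer_minus_smult_one:
  assumes "char_poly (transfer m n A B C E) = (\<Prod>z\<leftarrow>zs. [:- z, 1:])"
  shows "det (transfer m n A B C E - w \<cdot>\<^sub>m 1\<^sub>m (2 * m)) = (\<Prod>z\<leftarrow>zs. w - z)"
  using det_minus_smult_one_char_poly[OF transfer_carrier assms] by simp

lemma sum_ln_norm_eigenvalues_transfer:
  assumes cp: "char_poly (transfer m n A B C E) = (\<Prod>z\<leftarrow>zs. [:- z, 1:])"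
    and C_invertible: "\<And>k. k \<in> {1..n} \<Longrightarrow> invertible_mat (C k)"
  shows "0 \<notin> set zs"
    and "(\<Sum>z\<leftarrow>zs. ln (cmod z)) = (\<Sum>k = 1..n. ln (cmod (det (C k)))) - (\<Sum>k = 1..n. ln (cmod (det (B k))))"
proof -
  have dets: "det (B k) \<noteq> 0" "det (C k) \<noteq> 0" if "k \<in> {1..n}" for k
    using det_nonzero_of_invertible[OF B_carrier B_invertible] det_nonzero_of_invertible[OF C_carrier C_invertible] that
    by blast+
  have "transfer m n A B C E - 0 \<cdot>\<^sub>m 1\<^sub>m (2 * m) = transfer m n A B C E"
    using transfer_carrier[of E] by (intro eq_matI) auto
  then have prod_eq: "(\<Prod>z\<leftarrow>zs. - z) = (\<Prod>k = 1..n. det (C k) / det (B k))"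
    using det_transfer_minus_smult_one[OF cp, of 0] det_tprod[of n E] by (simp add: transfer_def)
  moreover have "(\<Prod>k = 1..n. det (C k) / det (B k)) \<noteq> 0" using dets by simp
  ultimately have "(\<Prod>z\<leftarrow>zs. - z) \<noteq> 0" by simp
  then show zs: "0 \<notin> set zs" by (auto simp: prod_list_zero_iff)
  have "(\<Prod>z\<leftarrow>zs. cmod z) = cmod (\<Prod>z\<leftarrow>zs. - z)" by (simp add: norm_prod_list_map)
  also have "\<dots> = (\<Prod>k = 1..n. cmod (det (C k)) / cmod (det (B k)))"
    by (simp add: prod_eq prod_norm[symmetric] norm_divide)
  finally have prod: "(\<Prod>z\<leftarrow>zs. cmod z) = (\<Prod>k = 1..n. cmod (det (C k)) / cmod (det (B k)))" .
  have "(\<Sum>z\<leftarrow>zs. ln (cmod z)) = ln (\<Prod>z\<leftarrow>zs. cmod z)"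
    using zs by (subst ln_prod_list) auto
  also have "\<dots> = ln (\<Prod>k = 1..n. cmod (det (C k)) / cmod (det (B k)))" by (simp only: prod)
  also have "\<dots> = (\<Sum>k = 1..n. ln (cmod (det (C k))) - ln (cmod (det (B k))))"
    using dets by (subst ln_prod) (auto simp: ln_div)
  finally show "(\<Sum>z\<leftarrow>zs. ln (cmod z)) = (\<Sum>k = 1..n. ln (cmod (det (C k)))) - (\<Sum>k = 1..n. ln (cmod (det (B k))))"
    by (simp add: sum_subtractf)
qed

end

context periodic_block_tridiagonal
begin

lemma norm_det_Hmat_circle:
  assumes cp: "char_poly (transfer m n A B C E) = (\<Prod>z\<leftarrow>zs. [:- z, 1:])" and r: "0 < r"
  shows "cmod (det (Hmat m n A B C (of_real r * exp (\<i> * of_real \<phi>)) - E \<cdot>\<^sub>m 1\<^sub>m (n * m))) =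
    (\<Prod>k = 1..n. cmod (det (B k))) / r ^ m * (\<Prod>z\<leftarrow>zs. cmod (of_real r * exp (\<i> * of_real \<phi>) - z))"
proof -
  let ?w = "of_real r * exp (\<i> * of_real \<phi>)"
  have w: "?w \<noteq> 0" "cmod ?w = r" using r by (simp_all add: norm_mult)
  have "r ^ m * cmod (det (Hmat m n A B C ?w - E \<cdot>\<^sub>m 1\<^sub>m (n * m))) =
      (\<Prod>k = 1..n. cmod (det (B k))) * (\<Prod>z\<leftarrow>zs. cmod (?w - z))"
    using arg_cong[OF det_Hmat_minus_eq_det_transfer[OF w(1), of E], of cmod] w(2)
    by (simp add: det_transfer_minus_smult_one[OF cp] norm_mult norm_power norm_prod_list_map prod_norm o_def)
  then show ?thesis using r by (simp add: field_simps)
qed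

lemma has_integral_ln_norm_det_Hmat_circle:
  assumes cp: "char_poly (transfer m n A B C E) = (\<Prod>z\<leftarrow>zs. [:- z, 1:])" and r: "0 < r" and zs: "0 \<notin> set zs"
  shows "((\<lambda>\<phi>. ln (cmod (det (Hmat m n A B C (of_real r * exp (\<i> * of_real \<phi>)) - E \<cdot>\<^sub>m 1\<^sub>m (n * m))))) has_integral
    2 * pi * ((\<Sum>k = 1..n. ln (cmod (det (B k)))) - real m * ln r + (\<Sum>z\<leftarrow>zs. max (ln r) (ln (cmod z))))) {0..2 * pi}"
proof -
  have dets: "cmod (det (B k)) \<noteq> 0" if "k \<in> {1..n}" for k
    using det_nonzero_of_invertible[OF B_carrier B_invertible] that by simp
  have "ln (\<Prod>k = 1..n. cmod (det (B k))) = (\<Sum>k = 1..n. ln (cmod (det (B k))))"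
    using dets by (intro ln_prod) auto
  then have ln_eq: "ln ((\<Prod>k = 1..n. cmod (det (B k))) / r ^ m) = (\<Sum>k = 1..n. ln (cmod (det (B k)))) - real m * ln r"
    using dets r by (subst ln_div) (auto simp: ln_realpow)
  have "0 < (\<Prod>k = 1..n. cmod (det (B k)))"
    using dets by (intro prod_pos) auto
  then have "0 < (\<Prod>k = 1..n. cmod (det (B k))) / r ^ m"
    using r by simp
  from jensen_prod_linear_factors[OF r this zs]
  show ?thesis by (simp only: norm_det_Hmat_circle[OF cp r] ln_eq)
qed

lemma integral_ln_norm_det_Hmat_circle:
  fixes a :: real
  assumes cp: "char_poly (transfer m n A B C E) = (\<Prod>z\<leftarrow>zs. [:- z, 1:])" and zs: "0 \<notin> set zs"
  shows "integral {0..2 * pi} (\<lambda>\<phi>. ln (cmod (det (Hmat m n A B C (exp (of_real a + \<i> * of_real \<phi>))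
      - E \<cdot>\<^sub>m 1\<^sub>m (n * m)))) / (2 * pi)) =
    (\<Sum>k = 1..n. ln (cmod (det (B k)))) - real m * a + (\<Sum>z\<leftarrow>zs. max a (ln (cmod z)))"
proof -
  have "exp (of_real a + \<i> * of_real \<phi>) = of_real (exp a) * exp (\<i> * of_real \<phi>)" for \<phi>
    unfolding exp_add exp_of_real ..
  then show ?thesis
    using integral_unique[OF has_integral_divide[OF has_integral_ln_norm_det_Hmat_circle[OF cp _ zs], of "exp a" "2 * pi"]]
    by simp
qed

end

theorem proposition7:
  fixes m n :: nat and A B C :: "nat \<Rightarrow> complex mat" and E :: complex
    and zs :: "complex list" and \<xi> :: real
  assumes "m \<ge> 1" and "n \<ge> 3"
    and "\<And>k. k \<in> {1..n} \<Longrightarrow> A k \<in> carrier_mat m m"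
    and "\<And>k. k \<in> {1..n} \<Longrightarrow> B k \<in> carrier_mat m m"
    and "\<And>k. k \<in> {1..n} \<Longrightarrow> C k \<in> carrier_mat m m"
    and "\<And>k. k \<in> {1..n} \<Longrightarrow> invertible_mat (B k)"
    and "\<And>k. k \<in> {1..n} \<Longrightarrow> invertible_mat (C k)"
    and "char_poly (transfer m n A B C E) = (\<Prod>z\<leftarrow>zs. [:- z, 1:])"
  shows "(1 / real m) * (\<Sum>z\<leftarrow>zs. if ln (cmod z) / real n < \<xi>
                                   then \<xi> - ln (cmod z) / real n else 0) - \<xi>
       = (1 / (real m * real n)) *
           integral {0..2 * pi} (\<lambda>\<phi>. ln (cmod (Determinant.det
              (Hmat m n A B C (exp (complex_of_real (real n * \<xi>) + \<i> * complex_of_real \<phi>))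
               - E \<cdot>\<^sub>m 1\<^sub>m (n * m)))) / (2 * pi))
         - (1 / (real m * real n)) * (\<Sum>j = 1..n. ln (cmod (Determinant.det (C j))))"
proof -
  interpret periodic_block_tridiagonal m n A B C
    using assms(1-6) by unfold_locales auto
  have zs: "0 \<notin> set zs"
    and sum_ln: "(\<Sum>z\<leftarrow>zs. ln (cmod z)) = (\<Sum>k = 1..n. ln (cmod (det (C k)))) - (\<Sum>k = 1..n. ln (cmod (det (B k))))"
    using sum_ln_norm_eigenvalues_transfer[OF assms(8,7)] by blast+
  have max_split: "(\<Sum>z\<leftarrow>zs. max (real n * \<xi>) (ln (cmod z))) =
      (\<Sum>z\<leftarrow>zs. ln (cmod z)) + real n * (\<Sum>z\<leftarrow>zs. if ln (cmod z) / real n < \<xi> then \<xi> - ln (cmod z) / real n else 0)"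
    using assms(2) by (intro sum_list_max_split) simp
  show ?thesis
    unfolding integral_ln_norm_det_Hmat_circle[OF assms(8) zs] max_split sum_ln
    using assms(1,2) by (simp add: field_simps)
qed

end
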